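(* Let $a,b,k,\ell$ be positive integers with $\gcd(a,b)=1$. The number of pairs of integers $(\alpha,\beta)$ with $0\le\alpha<k$, $0\le\beta<\ell$ and $\gcd(k,\ell,a\beta-b\alpha)=1$ equals $$k\ell\,\frac{\varphi(\gcd(k,\ell))}{\gcd(k,\ell)},$$ where $\varphi$ is Euler's totient function. *)

theory Defs
  imports "HOL-Number_Theory.Number_Theory"
begin

end

theory Submission
  imports Defs
begin

(*
  The condition only depends on \<alpha> and \<beta> modulo g, and g divides both k and l, so the
  box splits into (k/g)(l/g) translated copies of the square [0,g)^2, each containing
  the same number of solutions (first section: sums and counts of periodic functions).

  In the square, gcd(a,b) = 1 gives a unimodular matrix (a, -b; -c, d) with ad - bc = 1,
  and (x,y) \<mapsto> ((ay - bx) mod g, (dx - cy) mod g) permutes [0,g)^2.  Hence the linear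
  form ay - bx is equidistributed modulo g: each residue t is hit exactly g times
  (second section).
  The number of units t in [0,g) is \<phi>(g) (third section, via the residue ring), so the
  square contains g \<phi>(g) solutions, and the box contains (k/g)(l/g) g \<phi>(g) = kl \<phi>(g)/g.
*)

lemma sum_periodic:
  fixes f :: "int \<Rightarrow> 'a::semiring_1"
  assumes "g \<ge> 0" and periodic: "\<And>x. f (x + g) = f x"
  shows "(\<Sum>x\<in>{0..<int m * g}. f x) = of_nat m * (\<Sum>x\<in>{0..<g}. f x)"
proof (induction m)
  case 0
  then show ?case by simp
next
  case (Suc m)
  let ?s = "int m * g"
  have shift: "f (x + ?s) = f x" for x
  proof (induction m)
    case (Suc m)
    then show ?case using periodic[of "x + int m * g"] by (simp add: algebra_simps)
  qed simp
  have split: "{0..<int (Suc m) * g} = {0..<?s} \<union> {?s..<?s + g}"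
    using \<open>g \<ge> 0\<close> by (subst ivl_disj_un_two(3)) (auto simp: algebra_simps)
  have "(\<Sum>x\<in>{?s..<?s + g}. f x) = (\<Sum>x\<in>{0..<g}. f (x + ?s))"
    by (rule sum.reindex_bij_witness[where i = "\<lambda>x. x + ?s" and j = "\<lambda>x. x - ?s"]) auto
  also have "\<dots> = (\<Sum>x\<in>{0..<g}. f x)"
    by (simp add: shift)
  finally have last_period: "(\<Sum>x\<in>{?s..<?s + g}. f x) = (\<Sum>x\<in>{0..<g}. f x)" .
  have "(\<Sum>x\<in>{0..<int (Suc m) * g}. f x) = (\<Sum>x\<in>{0..<?s}. f x) + (\<Sum>x\<in>{?s..<?s + g}. f x)"
    unfolding split by (rule sum.union_disjoint) auto
  then show ?case
    by (simp only: Suc.IH last_period) (simp add: algebra_simps)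
qed

lemma card_periodic:
  fixes P :: "int \<Rightarrow> bool"
  assumes "g \<ge> 0" and "\<And>y. P (y + g) = P y"
  shows "card {y\<in>{0..<int m * g}. P y} = m * card {y\<in>{0..<g}. P y}"
proof -
  have count: "card {y\<in>{0..<n}. P y} = (\<Sum>y\<in>{0..<n}. if P y then 1 else 0)" for n :: int
    by (simp add: sum.inter_filter[symmetric])
  show ?thesis
    unfolding count using sum_periodic[of g "\<lambda>y. if P y then 1::nat else 0"] assms by simp
qed

lemma card_box_periodic:
  fixes P :: "int \<Rightarrow> int \<Rightarrow> bool"
  assumes "g \<ge> 0"
    and periodic_x: "\<And>x y. P (x + g) y = P x y"
    and periodic_y: "\<And>x y. P x (y + g) = P x y"
  shows "card {(x, y). 0 \<le> x \<and> x < int m * g \<and> 0 \<le> y \<and> y < int n * g \<and> P x y}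
       = m * n * card {(x, y). 0 \<le> x \<and> x < g \<and> 0 \<le> y \<and> y < g \<and> P x y}"
proof -
  have box: "card {(x, y). 0 \<le> x \<and> x < r \<and> 0 \<le> y \<and> y < s \<and> P x y}
           = (\<Sum>x\<in>{0..<r}. card {y\<in>{0..<s}. P x y})" for r s :: int
  proof -
    have "{(x, y). 0 \<le> x \<and> x < r \<and> 0 \<le> y \<and> y < s \<and> P x y}
        = Sigma {0..<r} (\<lambda>x. {y\<in>{0..<s}. P x y})" by auto
    moreover have "finite {y\<in>{0..<s}. P x y}" for x
      by (rule finite_subset[of _ "{0..<s}"]) auto
    ultimately show ?thesis by (simp add: card_SigmaI)
  qed
  have "(\<Sum>x\<in>{0..<int m * g}. card {y\<in>{0..<int n * g}. P x y})
      = (\<Sum>x\<in>{0..<int m * g}. n * card {y\<in>{0..<g}. P x y})"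
    using card_periodic[OF \<open>g \<ge> 0\<close>] periodic_y by simp
  also have "\<dots> = n * (\<Sum>x\<in>{0..<int m * g}. card {y\<in>{0..<g}. P x y})"
    by (simp add: sum_distrib_left)
  also have "(\<Sum>x\<in>{0..<int m * g}. card {y\<in>{0..<g}. P x y})
           = m * (\<Sum>x\<in>{0..<g}. card {y\<in>{0..<g}. P x y})"
    using sum_periodic[OF \<open>g \<ge> 0\<close>, where f = "\<lambda>x. card {y\<in>{0..<g}. P x y}"] periodic_x
    by simp
  finally show ?thesis
    unfolding box by simp
qed

text \<open>For coprime a, b the map (x,y) \<mapsto> ((a y - b x) mod g, (d x - c y) mod g), with
  a d - b c = 1, is injective on [0,g)^2: its inverse is (t,s) \<mapsto> ((c t + a s) mod g,
  (d t + b s) mod g).  Consequently it permutes the square, and every residue class is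
  taken by a y - b x exactly g times in the square.\<close>

lemma card_linear_form_mod:
  fixes a b g :: int and Q :: "int \<Rightarrow> bool"
  assumes "gcd a b = 1" "g > 0"
  shows "card {(x, y). 0 \<le> x \<and> x < g \<and> 0 \<le> y \<and> y < g \<and> Q ((a * y - b * x) mod g)}
       = nat g * card {t\<in>{0..<g}. Q t}"
proof -
  obtain d c where det: "a * d - b * c = 1"
    using bezout_int[of a b] assms(1) by (metis add.commute diff_minus_eq_add mult.commute
        mult_minus_right)
  define S where "S = {0..<g} \<times> {0..<g}"
  define F where "F = (\<lambda>(x, y). ((a * y - b * x) mod g, (d * x - c * y) mod g))"
  have recover: "(c * ((a * y - b * x) mod g) + a * ((d * x - c * y) mod g)) mod g = x mod g"
                "(d * ((a * y - b * x) mod g) + b * ((d * x - c * y) mod g)) mod g = y mod g"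
    for x y
  proof -
    have "c * (a * y - b * x) + a * (d * x - c * y) = (a * d - b * c) * x"
         "d * (a * y - b * x) + b * (d * x - c * y) = (a * d - b * c) * y"
      by (simp_all add: algebra_simps)
    then show "(c * ((a * y - b * x) mod g) + a * ((d * x - c * y) mod g)) mod g = x mod g"
              "(d * ((a * y - b * x) mod g) + b * ((d * x - c * y) mod g)) mod g = y mod g"
      using det by (metis mod_add_eq mod_mult_right_eq mult_1)+
  qed
  have inj: "inj_on F S"
  proof (rule inj_onI)
    fix p q assume "p \<in> S" "q \<in> S" "F p = F q"
    then show "p = q"
      using recover unfolding S_def F_def
      by (cases p, cases q) (clarsimp, metis mod_pos_pos_trivial)
  qed
  have "F ` S \<subseteq> S"
    using \<open>g > 0\<close> by (auto simp: S_def F_def)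
  then have onto: "F ` S = S"
    using inj by (intro endo_inj_surj) (auto simp: S_def)
  have "{(x, y). 0 \<le> x \<and> x < g \<and> 0 \<le> y \<and> y < g \<and> Q ((a * y - b * x) mod g)}
      = {p\<in>S. Q (fst (F p))}"
    by (auto simp: S_def F_def)
  moreover have "F ` {p\<in>S. Q (fst (F p))} = {t\<in>{0..<g}. Q t} \<times> {0..<g}"
  proof -
    have "F ` {p\<in>S. Q (fst (F p))} = {q\<in>F ` S. Q (fst q)}" by blast
    then show ?thesis unfolding onto by (auto simp: S_def)
  qed
  moreover have "card (F ` {p\<in>S. Q (fst (F p))}) = card {p\<in>S. Q (fst (F p))}"
    using inj by (intro card_image) (auto intro: inj_on_subset)
  ultimately show ?thesis
    by (simp add: card_cartesian_product mult.commute)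
qed

lemma card_units_mod:
  fixes g :: int
  assumes "g > 0"
  shows "card {t\<in>{0..<g}. gcd g t = 1} = totient (nat g)"
proof (cases "g = 1")
  case True
  then have "{t\<in>{0..<g}. gcd g t = 1} = {0}" by auto
  then show ?thesis using True by simp
next
  case False
  with assms interpret residues g "residue_ring g"
    by unfold_locales simp
  have "{t\<in>{0..<g}. gcd g t = 1} = {x. 0 < x \<and> x < g \<and> coprime x g}"
    using False by (auto simp: coprime_iff_gcd_eq_1 gcd.commute le_less)
  then show ?thesis
    by (simp add: totient_eq res_units_eq)
qed

lemma card_square_coprime_linear_form:
  fixes a b g :: int
  assumes "gcd a b = 1" "g > 0"
  shows "card {(x, y). 0 \<le> x \<and> x < g \<and> 0 \<le> y \<and> y < g \<and> gcd g ((a * y - b * x) mod g) = 1}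
       = nat g * totient (nat g)"
  using card_linear_form_mod[OF assms, of "\<lambda>t. gcd g t = 1"] card_units_mod[OF assms(2)] by simp

lemma int_multiple_of_divisor:
  fixes g k :: int
  assumes "g dvd k" "g > 0" "k \<ge> 0"
  obtains i :: nat where "k = int i * g"
proof -
  from assms(1) obtain q where q: "k = g * q" by (elim dvdE)
  with assms(2,3) have "q \<ge> 0" by (simp add: zero_le_mult_iff)
  with q show ?thesis using that[of "nat q"] by (simp add: mult.commute)
qed

theorem mainTheorem17:
  fixes a b k l :: int
  assumes "a > 0" "b > 0" "k > 0" "l > 0" "gcd a b = 1"
  shows "real (card {(\<alpha>::int, \<beta>::int). 0 \<le> \<alpha> \<and> \<alpha> < k \<and> 0 \<le> \<beta> \<and> \<beta> < l \<and>
                  gcd (gcd k l) (a * \<beta> - b * \<alpha>) = 1})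
       = real_of_int (k * l) * real (totient (nat (gcd k l))) / real_of_int (gcd k l)"
proof -
  define g where "g = gcd k l"
  have "g > 0" using assms by (simp add: g_def)
  (* the condition, reduced mod g: visibly g-periodic and of the shape counted in the square *)
  define P where "P = (\<lambda>\<alpha> \<beta>. gcd g ((a * \<beta> - b * \<alpha>) mod g) = 1)"
  have P_eq: "gcd g (a * \<beta> - b * \<alpha>) = 1 \<longleftrightarrow> P \<alpha> \<beta>" for \<alpha> \<beta>
    by (simp add: P_def gcd_red_int[symmetric] gcd.commute)
  obtain i j where k: "k = int i * g" and l: "l = int j * g"
    using int_multiple_of_divisor[of g k] int_multiple_of_divisor[of g l] \<open>g > 0\<close> assms(3,4)
    unfolding g_def by (metis gcd_dvd1 gcd_dvd2 less_imp_le)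
  have "card {(\<alpha>, \<beta>). 0 \<le> \<alpha> \<and> \<alpha> < k \<and> 0 \<le> \<beta> \<and> \<beta> < l \<and> gcd g (a * \<beta> - b * \<alpha>) = 1}
      = i * j * card {(\<alpha>, \<beta>). 0 \<le> \<alpha> \<and> \<alpha> < g \<and> 0 \<le> \<beta> \<and> \<beta> < g \<and> P \<alpha> \<beta>}"
    unfolding P_eq k l
  proof (rule card_box_periodic)
    show "P (\<alpha> + g) \<beta> = P \<alpha> \<beta>" for \<alpha> \<beta>
      using mod_mult_self1[of "a * \<beta> - b * \<alpha>" "- b" g] by (simp add: P_def algebra_simps)
    show "P \<alpha> (\<beta> + g) = P \<alpha> \<beta>" for \<alpha> \<beta>
      using mod_mult_self1[of "a * \<beta> - b * \<alpha>" a g] by (simp add: P_def algebra_simps)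
  qed (use \<open>g > 0\<close> in simp)
  also have "\<dots> = i * j * (nat g * totient (nat g))"
    unfolding P_def card_square_coprime_linear_form[OF assms(5) \<open>g > 0\<close>] ..
  finally have count: "card {(\<alpha>, \<beta>). 0 \<le> \<alpha> \<and> \<alpha> < k \<and> 0 \<le> \<beta> \<and> \<beta> < l \<and>
                           gcd g (a * \<beta> - b * \<alpha>) = 1} = i * j * (nat g * totient (nat g))" .
  have "real_of_int (k * l) * real (totient (nat g)) / real_of_int g
      = real (i * j * (nat g * totient (nat g)))"
    using \<open>g > 0\<close> unfolding k l by (simp add: field_simps)
  then show ?thesis
    unfolding g_def[symmetric] count by simp
qed

end
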